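(* Let $\mathcal{D}_I$ be the class of all finite irreflexive digraphs. (1) A class $\mathcal{C}\subseteq\mathcal{D}_I$ that is downward closed under the homomorphic image ordering is well quasi-ordered (under that ordering) if and only if it is finite. (2) For any finite set $\{O_1,\dots,O_k\}\subseteq\mathcal{D}_I$, the class $\mathrm{Av}(O_1,\dots,O_k)$, taken with respect to either the standard or the strong homomorphic image ordering, is not well quasi-ordered (under the respective ordering).
   Context: A digraph is a set $D$ with a binary relation $E(D)\subseteq D\times D$; it is irreflexive if no loop $(x,x)$ is an edge. A homomorphism maps edges to edges (so within irreflexive digraphs no edge can be collapsed to a vertex); it is strong if additionally every edge of the target between vertices of the image is the image of an edge. Standard homomorphic image ordering: $A\preceq B$ iff there is a surjective homomorphism $B\to A$; strong: iff there is a surjective strong homomorphism $B\to A$. $\mathrm{Av}(B)=\{x\in\mathcal{D}_I: b\not\preceq x\ \forall b\in B\}$. Well quasi-ordered means no infinite strictly decreasing sequence and no infinite antichain; digraphs considered up to isomorphism (finite means finitely many isomorphism types). *)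

theory Defs
  imports Main
begin

text \<open>A digraph is represented by a vertex set and an edge relation on it.
  Vertices are natural numbers, so every finite digraph is represented up to isomorphism.\<close>

type_synonym digraph = "nat set \<times> (nat \<times> nat) set"

definition verts :: "digraph \<Rightarrow> nat set" where "verts G = fst G"
definition edges :: "digraph \<Rightarrow> (nat \<times> nat) set" where "edges G = snd G"

definition DI :: "digraph set" where
  "DI = {G. finite (verts G) \<and> edges G \<subseteq> verts G \<times> verts G \<and> (\<forall>x. (x, x) \<notin> edges G)}"

definition is_hom :: "digraph \<Rightarrow> digraph \<Rightarrow> (nat \<Rightarrow> nat) \<Rightarrow> bool" where
  "is_hom G H f \<longleftrightarrow> f ` verts G \<subseteq> verts H \<and>
     (\<forall>x y. (x, y) \<in> edges G \<longrightarrow> (f x, f y) \<in> edges H)"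

definition is_strong_hom :: "digraph \<Rightarrow> digraph \<Rightarrow> (nat \<Rightarrow> nat) \<Rightarrow> bool" where
  "is_strong_hom G H f \<longleftrightarrow> is_hom G H f \<and>
     (\<forall>u v. (u, v) \<in> edges H \<longrightarrow> u \<in> f ` verts G \<longrightarrow> v \<in> f ` verts G \<longrightarrow>
        (\<exists>x y. (x, y) \<in> edges G \<and> f x = u \<and> f y = v))"

definition img_le :: "digraph \<Rightarrow> digraph \<Rightarrow> bool" where
  "img_le A B \<longleftrightarrow> (\<exists>f. is_hom B A f \<and> f ` verts B = verts A)"

definition strong_img_le :: "digraph \<Rightarrow> digraph \<Rightarrow> bool" where
  "strong_img_le A B \<longleftrightarrow> (\<exists>f. is_strong_hom B A f \<and> f ` verts B = verts A)"

definition digraph_iso :: "digraph \<Rightarrow> digraph \<Rightarrow> bool" where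
  "digraph_iso G H \<longleftrightarrow> (\<exists>f. bij_betw f (verts G) (verts H) \<and>
     (\<forall>x\<in>verts G. \<forall>y\<in>verts G. (x, y) \<in> edges G \<longleftrightarrow> (f x, f y) \<in> edges H))"

definition finite_upto_iso :: "digraph set \<Rightarrow> bool" where
  "finite_upto_iso C \<longleftrightarrow> (\<exists>F. finite F \<and> F \<subseteq> C \<and> (\<forall>G\<in>C. \<exists>H\<in>F. digraph_iso G H))"

definition downward_closed :: "(digraph \<Rightarrow> digraph \<Rightarrow> bool) \<Rightarrow> digraph set \<Rightarrow> bool" where
  "downward_closed le C \<longleftrightarrow> (\<forall>x\<in>C. \<forall>y\<in>DI. le y x \<longrightarrow> y \<in> C)"

definition wqo_on :: "(digraph \<Rightarrow> digraph \<Rightarrow> bool) \<Rightarrow> digraph set \<Rightarrow> bool" where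
  "wqo_on le C \<longleftrightarrow>
     \<not> (\<exists>f::nat \<Rightarrow> digraph. \<forall>i. f i \<in> C \<and> le (f (Suc i)) (f i) \<and> \<not> le (f i) (f (Suc i))) \<and>
     \<not> (\<exists>f::nat \<Rightarrow> digraph. (\<forall>i. f i \<in> C) \<and> (\<forall>i j. i \<noteq> j \<longrightarrow> \<not> le (f i) (f j)))"

definition Av :: "(digraph \<Rightarrow> digraph \<Rightarrow> bool) \<Rightarrow> digraph set \<Rightarrow> digraph set" where
  "Av le B = {x \<in> DI. \<forall>b\<in>B. \<not> le b x}"

end

theory Submission
  imports Defs "HOL-Library.Infinite_Set"
begin

text \<open>A homomorphism from the complete digraph \<open>K\<^sub>n\<close> into an irreflexive digraph is injective,
  so the homomorphic images of \<open>K\<^sub>n\<close> have exactly \<open>n\<close> vertices and complete digraphs of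
  different sizes are incomparable; conversely every irreflexive digraph on \<open>n\<close> vertices maps
  bijectively onto \<open>K\<^sub>n\<close>. Hence a downward closed class of unbounded vertex count contains an
  infinite antichain of complete digraphs, and so does every \<open>Av(B)\<close>, which contains all \<open>K\<^sub>n\<close>
  with \<open>n\<close> beyond the sizes of the members of \<open>B\<close>. In the other direction, an infinite sequence
  in a class with finitely many isomorphism types repeats a type, which rules out both infinite
  strictly descending chains and infinite antichains.\<close>

lemma img_le_refl: "img_le G G"
  unfolding img_le_def is_hom_def by (intro exI[of _ id]) simp

lemma img_le_trans:
  assumes "img_le A B" "img_le B C"
  shows "img_le A C"
proof -
  obtain f where f: "is_hom B A f" "f ` verts B = verts A"
    using assms(1) by (auto simp: img_le_def)
  obtain g where g: "is_hom C B g" "g ` verts C = verts B"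
    using assms(2) by (auto simp: img_le_def)
  have "is_hom C A (f \<circ> g)"
    using f(1) g(1) unfolding is_hom_def by (auto simp: image_subset_iff)
  moreover have "(f \<circ> g) ` verts C = verts A"
    using f(2) g(2) by (metis image_comp)
  ultimately show ?thesis unfolding img_le_def by blast
qed

lemma img_le_descending_chain:
  assumes "\<And>i. img_le (f (Suc i)) (f i)" "i \<le> j"
  shows "img_le (f j) (f i)"
  using assms(2)
proof (induction j rule: dec_induct)
  case base
  show ?case by (rule img_le_refl)
next
  case (step j)
  then show ?case using assms(1) img_le_trans by blast
qed

lemma strong_img_le_imp_img_le: "strong_img_le A B \<Longrightarrow> img_le A B"
  by (auto simp: strong_img_le_def img_le_def is_strong_hom_def)

lemma not_wqo_on_if_antichain:
  fixes f :: "nat \<Rightarrow> digraph"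
  assumes "\<And>i. f i \<in> C" "\<And>i j. i \<noteq> j \<Longrightarrow> \<not> le (f i) (f j)"
  shows "\<not> wqo_on le C"
proof -
  have "\<exists>g :: nat \<Rightarrow> digraph. (\<forall>i. g i \<in> C) \<and> (\<forall>i j. i \<noteq> j \<longrightarrow> \<not> le (g i) (g j))"
    using assms by (intro exI[of _ f]) blast
  then show ?thesis unfolding wqo_on_def by blast
qed

definition complete_digraph :: "nat \<Rightarrow> digraph" where
  "complete_digraph n = ({0..<n}, {(x, y). x < n \<and> y < n \<and> x \<noteq> y})"

lemma verts_complete_digraph [simp]: "verts (complete_digraph n) = {0..<n}"
  by (simp add: complete_digraph_def verts_def)

lemma edges_complete_digraph [simp]:
  "edges (complete_digraph n) = {(x, y). x < n \<and> y < n \<and> x \<noteq> y}"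
  by (simp add: complete_digraph_def edges_def)

lemma complete_digraph_in_DI: "complete_digraph n \<in> DI"
  by (auto simp: DI_def)

lemma card_verts_if_img_le_complete_digraph:
  assumes "A \<in> DI" "img_le A (complete_digraph n)"
  shows "card (verts A) = n"
proof -
  obtain f where f: "is_hom (complete_digraph n) A f" "f ` {0..<n} = verts A"
    using assms(2) by (auto simp: img_le_def)
  have "inj_on f {0..<n}"
  proof (rule inj_onI)
    fix x y assume xy: "x \<in> {0..<n}" "y \<in> {0..<n}" and eq: "f x = f y"
    show "x = y"
    proof (rule ccontr)
      assume "x \<noteq> y"
      with xy f(1) have "(f x, f y) \<in> edges A" by (simp add: is_hom_def)
      with eq assms(1) show False by (simp add: DI_def)
    qed
  qed
  then show ?thesis using f(2) card_image by fastforce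
qed

lemma img_le_complete_digraph_iff:
  "img_le (complete_digraph m) (complete_digraph n) \<longleftrightarrow> m = n"
  using card_verts_if_img_le_complete_digraph[OF complete_digraph_in_DI] img_le_refl by fastforce

lemma complete_digraph_img_le:
  assumes "G \<in> DI"
  shows "img_le (complete_digraph (card (verts G))) G"
proof -
  have "finite (verts G)" using assms by (simp add: DI_def)
  then obtain h where h: "bij_betw h (verts G) {0..<card (verts G)}"
    using ex_bij_betw_finite_nat by blast
  have "(h x, h y) \<in> edges (complete_digraph (card (verts G)))" if "(x, y) \<in> edges G" for x y
  proof -
    have "x \<in> verts G" "y \<in> verts G" "x \<noteq> y" using that assms by (auto simp: DI_def)
    then show ?thesis using h by (auto simp: bij_betw_def inj_on_def)
  qed
  then show ?thesis
    using h unfolding img_le_def is_hom_def bij_betw_def by (intro exI[of _ h]) auto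
qed

lemma complete_digraphs_antichain:
  assumes "inj s" "i \<noteq> j"
  shows "\<not> img_le (complete_digraph (s i)) (complete_digraph (s j))"
  using assms by (simp add: img_le_complete_digraph_iff inj_eq)

lemma digraph_iso_sym:
  assumes "digraph_iso G H"
  shows "digraph_iso H G"
proof -
  obtain f where f: "bij_betw f (verts G) (verts H)"
    "\<forall>x\<in>verts G. \<forall>y\<in>verts G. (x, y) \<in> edges G \<longleftrightarrow> (f x, f y) \<in> edges H"
    using assms by (auto simp: digraph_iso_def)
  let ?g = "inv_into (verts G) f"
  have g: "bij_betw ?g (verts H) (verts G)"
    using f(1) by (rule bij_betw_inv_into)
  have "(u, v) \<in> edges H \<longleftrightarrow> (?g u, ?g v) \<in> edges G" if "u \<in> verts H" "v \<in> verts H" for u v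
  proof -
    have "?g u \<in> verts G" "?g v \<in> verts G"
      using g that by (auto dest: bij_betwE)
    moreover have "f (?g u) = u" "f (?g v) = v"
      using bij_betw_inv_into_right[OF f(1)] that by auto
    ultimately show ?thesis using f(2) by metis
  qed
  then show ?thesis using g by (auto simp: digraph_iso_def)
qed

lemma digraph_iso_trans:
  assumes "digraph_iso G H" "digraph_iso H K"
  shows "digraph_iso G K"
proof -
  obtain f where f: "bij_betw f (verts G) (verts H)"
    "\<forall>x\<in>verts G. \<forall>y\<in>verts G. (x, y) \<in> edges G \<longleftrightarrow> (f x, f y) \<in> edges H"
    using assms(1) by (auto simp: digraph_iso_def)
  obtain g where g: "bij_betw g (verts H) (verts K)"
    "\<forall>x\<in>verts H. \<forall>y\<in>verts H. (x, y) \<in> edges H \<longleftrightarrow> (g x, g y) \<in> edges K"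
    using assms(2) by (auto simp: digraph_iso_def)
  have "bij_betw (g \<circ> f) (verts G) (verts K)"
    using f(1) g(1) by (rule bij_betw_trans)
  moreover have "(x, y) \<in> edges G \<longleftrightarrow> ((g \<circ> f) x, (g \<circ> f) y) \<in> edges K"
    if "x \<in> verts G" "y \<in> verts G" for x y
    using that f g by (simp add: bij_betwE)
  ultimately show ?thesis by (auto simp: digraph_iso_def)
qed

lemma img_le_if_digraph_iso:
  assumes "digraph_iso G H" "G \<in> DI"
  shows "img_le H G"
proof -
  obtain f where f: "bij_betw f (verts G) (verts H)"
    "\<forall>x\<in>verts G. \<forall>y\<in>verts G. (x, y) \<in> edges G \<longleftrightarrow> (f x, f y) \<in> edges H"
    using assms(1) by (auto simp: digraph_iso_def)
  have "(f x, f y) \<in> edges H" if "(x, y) \<in> edges G" for x y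
    using that f(2) assms(2) by (auto simp: DI_def)
  then show ?thesis using f(1) unfolding img_le_def is_hom_def bij_betw_def by blast
qed

definition relabel :: "(nat \<Rightarrow> nat) \<Rightarrow> digraph \<Rightarrow> digraph" where
  "relabel h G = (h ` verts G, map_prod h h ` edges G)"

lemma digraph_iso_relabel:
  assumes "inj_on h (verts G)" "edges G \<subseteq> verts G \<times> verts G"
  shows "digraph_iso G (relabel h G)"
  unfolding digraph_iso_def
proof (intro exI conjI ballI)
  show "bij_betw h (verts G) (verts (relabel h G))"
    using assms(1) by (simp add: relabel_def verts_def bij_betw_def)
next
  fix x y assume xy: "x \<in> verts G" "y \<in> verts G"
  have "(h x, h y) \<in> map_prod h h ` edges G \<Longrightarrow> (x, y) \<in> edges G"
  proof (elim imageE)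
    fix e assume e: "(h x, h y) = map_prod h h e" "e \<in> edges G"
    then have "fst e \<in> verts G" "snd e \<in> verts G" using assms(2) by auto
    then have "e = (x, y)" using e(1) xy assms(1) by (cases e) (auto dest: inj_onD)
    then show ?thesis using e(2) by simp
  qed
  moreover have "(h x, h y) \<in> map_prod h h ` edges G" if "(x, y) \<in> edges G"
    using that by (intro rev_image_eqI[of "(x, y)"]) simp_all
  moreover have "edges (relabel h G) = map_prod h h ` edges G"
    by (simp add: relabel_def edges_def)
  ultimately show "(x, y) \<in> edges G \<longleftrightarrow> (h x, h y) \<in> edges (relabel h G)"
    by blast
qed

lemma digraph_iso_on_initial_segment:
  assumes "G \<in> DI"
  obtains H where "digraph_iso G H" "verts H = {0..<card (verts G)}"
    "edges H \<subseteq> verts H \<times> verts H"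
proof -
  have "finite (verts G)" using assms by (simp add: DI_def)
  then obtain h where h: "bij_betw h (verts G) {0..<card (verts G)}"
    using ex_bij_betw_finite_nat by blast
  have E: "edges G \<subseteq> verts G \<times> verts G" using assms by (simp add: DI_def)
  show ?thesis
  proof
    show "digraph_iso G (relabel h G)"
      using h E by (simp add: bij_betw_def digraph_iso_relabel)
    show "verts (relabel h G) = {0..<card (verts G)}"
      using h by (simp add: relabel_def verts_def bij_betw_def)
    show "edges (relabel h G) \<subseteq> verts (relabel h G) \<times> verts (relabel h G)"
      using E by (auto simp: relabel_def verts_def edges_def)
  qed
qed

lemma finite_upto_iso_if_card_verts_bounded:
  assumes "C \<subseteq> DI" "\<And>G. G \<in> C \<Longrightarrow> card (verts G) < N"
  shows "finite_upto_iso C"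
proof -
  define S where "S = Pow {..<N} \<times> Pow ({..<N} \<times> {..<N})"
  define T where "T = {H \<in> S. \<exists>G\<in>C. digraph_iso G H}"
  have "finite S" by (simp add: S_def)
  then have "finite T" by (simp add: T_def)
  have "\<forall>H\<in>T. \<exists>G. G \<in> C \<and> digraph_iso G H" by (auto simp: T_def)
  from bchoice[OF this] obtain r where r: "\<forall>H\<in>T. r H \<in> C \<and> digraph_iso (r H) H" ..
  have "\<exists>H\<in>r ` T. digraph_iso G H" if G: "G \<in> C" for G
  proof -
    obtain H where H: "digraph_iso G H" "verts H = {0..<card (verts G)}"
      "edges H \<subseteq> verts H \<times> verts H"
      using digraph_iso_on_initial_segment G assms(1) by blast
    have "verts H \<subseteq> {..<N}" "edges H \<subseteq> {..<N} \<times> {..<N}"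
      using H(2,3) assms(2)[OF G] by auto
    then have "H \<in> T"
      using H(1) G by (auto simp: T_def S_def verts_def edges_def mem_Times_iff)
    then show ?thesis
      using r H(1) digraph_iso_sym digraph_iso_trans by blast
  qed
  moreover have "r ` T \<subseteq> C" using r by blast
  ultimately show ?thesis
    unfolding finite_upto_iso_def using \<open>finite T\<close> by blast
qed

lemma finite_upto_iso_sequence_img_le:
  fixes f :: "nat \<Rightarrow> digraph"
  assumes "finite_upto_iso C" "C \<subseteq> DI" "\<And>i. f i \<in> C"
  obtains i j where "i < j" "img_le (f i) (f j)"
proof -
  obtain F where F: "finite F" "F \<subseteq> C" "\<forall>G\<in>C. \<exists>H\<in>F. digraph_iso G H"
    using assms(1) by (auto simp: finite_upto_iso_def)
  obtain H where "infinite {i. digraph_iso (f i) H}"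
    using pigeonhole_infinite_rel[of "UNIV :: nat set" F "\<lambda>i H. digraph_iso (f i) H"] F assms(3)
    by auto
  then obtain i j where ij: "i < j" "digraph_iso (f i) H" "digraph_iso (f j) H"
    unfolding infinite_nat_iff_unbounded by blast
  have "digraph_iso (f j) (f i)"
    using ij digraph_iso_sym digraph_iso_trans by blast
  then show ?thesis
    using that ij(1) img_le_if_digraph_iso assms(2,3) by blast
qed

lemma wqo_on_if_finite_upto_iso:
  assumes "C \<subseteq> DI" "finite_upto_iso C"
  shows "wqo_on img_le C"
  unfolding wqo_on_def
proof (intro conjI notI; elim exE)
  fix f :: "nat \<Rightarrow> digraph"
  assume f: "\<forall>i. f i \<in> C \<and> img_le (f (Suc i)) (f i) \<and> \<not> img_le (f i) (f (Suc i))"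
  have "f i \<in> C" for i using f by blast
  then obtain i j where ij: "i < j" "img_le (f i) (f j)"
    by (rule finite_upto_iso_sequence_img_le[OF assms(2,1)])
  have "img_le (f j) (f (Suc i))"
    by (rule img_le_descending_chain) (use f ij(1) in auto)
  with ij(2) have "img_le (f i) (f (Suc i))" by (rule img_le_trans)
  with f show False by blast
next
  fix f :: "nat \<Rightarrow> digraph"
  assume f: "(\<forall>i. f i \<in> C) \<and> (\<forall>i j. i \<noteq> j \<longrightarrow> \<not> img_le (f i) (f j))"
  have "f i \<in> C" for i using f by blast
  then obtain i j where "i < j" "img_le (f i) (f j)"
    by (rule finite_upto_iso_sequence_img_le[OF assms(2,1)])
  then show False using f by (metis less_irrefl)
qed

lemma finite_upto_iso_if_wqo_on:
  assumes "C \<subseteq> DI" "downward_closed img_le C" "wqo_on img_le C"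
  shows "finite_upto_iso C"
proof (rule ccontr)
  assume "\<not> finite_upto_iso C"
  have "\<exists>n>m. complete_digraph n \<in> C" for m
  proof -
    have "\<not> (\<forall>G\<in>C. card (verts G) < Suc m)"
      using finite_upto_iso_if_card_verts_bounded[OF assms(1)] \<open>\<not> finite_upto_iso C\<close> by blast
    then obtain G where G: "G \<in> C" "card (verts G) > m"
      by (auto simp: not_less_eq)
    with assms(1) have "img_le (complete_digraph (card (verts G))) G"
      by (blast intro: complete_digraph_img_le)
    with G(1) assms(2) have "complete_digraph (card (verts G)) \<in> C"
      using complete_digraph_in_DI unfolding downward_closed_def by blast
    with G(2) show ?thesis by blast
  qed
  then have T: "infinite {n. complete_digraph n \<in> C}"
    unfolding infinite_nat_iff_unbounded by simp
  have "\<not> wqo_on img_le C"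
  proof (rule not_wqo_on_if_antichain)
    show "complete_digraph (enumerate {n. complete_digraph n \<in> C} i) \<in> C" for i
      using enumerate_in_set[OF T] by simp
    show "\<not> img_le (complete_digraph (enumerate {n. complete_digraph n \<in> C} i))
                  (complete_digraph (enumerate {n. complete_digraph n \<in> C} j))" if "i \<noteq> j" for i j
      using strict_mono_imp_inj_on[OF strict_mono_enumerate[OF T]] that
      by (rule complete_digraphs_antichain)
  qed
  then show False using assms(3) by contradiction
qed

lemma not_wqo_on_Av:
  assumes "finite B" "B \<subseteq> DI"
  shows "\<not> wqo_on img_le (Av img_le B)" "\<not> wqo_on strong_img_le (Av strong_img_le B)"
proof -
  define N where "N = Suc (\<Sum>b\<in>B. card (verts b))"
  have avoids: "\<not> img_le b (complete_digraph (N + i))" if "b \<in> B" for b i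
  proof
    assume "img_le b (complete_digraph (N + i))"
    then have "card (verts b) = N + i"
      using card_verts_if_img_le_complete_digraph assms(2) that by blast
    moreover have "card (verts b) \<le> (\<Sum>b\<in>B. card (verts b))"
      using member_le_sum[of b B "\<lambda>b. card (verts b)"] that assms(1) by simp
    ultimately show False unfolding N_def by simp
  qed
  have antichain: "\<not> img_le (complete_digraph (N + i)) (complete_digraph (N + j))"
    if "i \<noteq> j" for i j
    using _ that by (rule complete_digraphs_antichain) (simp add: inj_def)
  show "\<not> wqo_on img_le (Av img_le B)"
  proof (rule not_wqo_on_if_antichain)
    show "complete_digraph (N + i) \<in> Av img_le B" for i
      using avoids complete_digraph_in_DI unfolding Av_def by blast
  qed (rule antichain)
  show "\<not> wqo_on strong_img_le (Av strong_img_le B)"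
  proof (rule not_wqo_on_if_antichain)
    show "complete_digraph (N + i) \<in> Av strong_img_le B" for i
      using avoids complete_digraph_in_DI strong_img_le_imp_img_le unfolding Av_def by blast
    show "\<not> strong_img_le (complete_digraph (N + i)) (complete_digraph (N + j))"
      if "i \<noteq> j" for i j
      using antichain[OF that] strong_img_le_imp_img_le by blast
  qed
qed

theorem theorem4p4:
  shows "(\<forall>C. C \<subseteq> DI \<longrightarrow> downward_closed img_le C \<longrightarrow>
            (wqo_on img_le C \<longleftrightarrow> finite_upto_iso C))
       \<and> (\<forall>B. finite B \<longrightarrow> B \<subseteq> DI \<longrightarrow>
            \<not> wqo_on img_le (Av img_le B) \<and> \<not> wqo_on strong_img_le (Av strong_img_le B))"
  using wqo_on_if_finite_upto_iso finite_upto_iso_if_wqo_on not_wqo_on_Av by metis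

end
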